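(* Let $\Sigma$ be a finite totally ordered alphabet. For all $x\in\Sigma^n$, $$|\mathcal{C}_x|=\sum_{y\in G_{x,\leq n}}\frac{1}{|\mathsf{Orbit}(y)|}=\sum_{y\in G_{x,\leq n}}\frac{1}{\mathsf{FP}(y)}.$$
   Context: For $y\in\Sigma^n$, $\mathsf{Orbit}(y)$ is the set consisting of $y$ and all its distinct cyclic rotations. $\mathsf{FP}(y)$ is the fundamental period of $y$: the least $p$ such that $y=y_1^{n/p}$ for some $y_1\in\Sigma^p$. For an orbit $E$ and $x\in\Sigma^n$, $E<x$ means $E$ contains a string lexicographically less than $x$; $\mathcal{C}_x$ is the set of orbits $E$ with $E<x$; and $G_{x,\leq p}=\bigcup_{E\in\mathcal{C}_x,\ |E|\text{ divides }p}E$. *)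

theory Defs
  imports Complex_Main
begin

definition strings :: "nat \<Rightarrow> 'a list set" where
  "strings n = {y. length y = n}"

definition Orbit :: "'a list \<Rightarrow> 'a list set" where
  "Orbit y = range (\<lambda>k. rotate k y)"

definition FP :: "'a list \<Rightarrow> nat" where
  "FP y = (LEAST p. p > 0 \<and> p dvd length y \<and>
     (\<exists>y1. length y1 = p \<and> y = concat (replicate (length y div p) y1)))"

definition lex_less :: "'a::linorder list \<Rightarrow> 'a list \<Rightarrow> bool" where
  "lex_less u v \<longleftrightarrow> (u, v) \<in> lexord {(a, b). a < b}"

definition orbits :: "nat \<Rightarrow> 'a list set set" where
  "orbits n = Orbit ` strings n"

definition C_set :: "'a::linorder list \<Rightarrow> 'a list set set" where
  "C_set x = {E \<in> orbits (length x). \<exists>z\<in>E. lex_less z x}"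

definition G_set :: "'a::linorder list \<Rightarrow> nat \<Rightarrow> 'a list set" where
  "G_set x p = \<Union>{E \<in> C_set x. card E dvd p}"

end

theory Submission imports Defs begin

text \<open>All members of an orbit E have E as their orbit, so E contributes card E terms
  1 / card E to the sum; the orbits in C_x are pairwise disjoint, so the sum counts them.
  Since every orbit of a string of length n has size dividing n, G_{x, \<le> n} is the union of
  all orbits in C_x. Finally card (Orbit y) and FP y are both the least positive rotation
  fixing y, because a rotation by p fixes y exactly when y is periodic with period p.\<close>

lemma rotate_mult_self: "rotate p y = y \<Longrightarrow> rotate (m * p) y = y"
  by (induction m) (auto simp: rotate_rotate[symmetric] add.commute)

lemma rotate_mod_self: "rotate p y = y \<Longrightarrow> rotate k y = rotate (k mod p) y"
  by (metis rotate_mult_self rotate_rotate mod_div_mult_eq)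

lemma nth_concat_replicate:
  "i < k * length z \<Longrightarrow> concat (replicate k z) ! i = z ! (i mod length z)"
proof (induction k arbitrary: i)
  case (Suc k)
  then show ?case
    by (cases "i < length z") (auto simp: nth_append mod_if)
qed simp

lemma rotate_concat_replicate:
  assumes "0 < k"
  shows "rotate (length z) (concat (replicate k z)) = concat (replicate k z)"
proof -
  obtain j where k: "k = Suc j" using assms by (cases k) auto
  have "rotate (length z) (concat (replicate k z)) = concat (replicate j z) @ z"
    by (simp add: k rotate_append)
  also have "\<dots> = concat (replicate k z)"
    by (simp add: k replicate_append_same[symmetric])
  finally show ?thesis .
qed

lemma nth_mod_rotate_self:
  assumes "rotate p y = y" "0 < p" "i < length y"
  shows "y ! i = y ! (i mod p)"
  using assms(3)
proof (induction i rule: less_induct)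
  case (less i)
  show ?case
  proof (cases "i < p")
    case False
    have "y ! i = rotate p y ! (i - p)"
      using False less.prems by (simp add: nth_rotate)
    also have "\<dots> = y ! ((i - p) mod p)"
      using less.IH[of "i - p"] less.prems False assms(1,2) by auto
    finally show ?thesis
      using False by (simp add: mod_if[of i p])
  qed simp
qed

lemma concat_replicate_take_if_rotate_self:
  assumes "rotate p y = y" "0 < p" "p dvd length y"
  shows "y = concat (replicate (length y div p) (take p y))"
proof (rule nth_equalityI)
  have "length y = 0 \<or> p \<le> length y"
    using assms(3) by (auto intro: dvd_imp_le)
  then show "length y = length (concat (replicate (length y div p) (take p y)))"
    using assms(3) by (auto simp: length_concat sum_list_replicate min_def split: if_splits)
  fix i assume i: "i < length y"
  then have "p \<le> length y"
    using assms(3) by (auto intro: dvd_imp_le)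
  then show "y ! i = concat (replicate (length y div p) (take p y)) ! i"
    using nth_concat_replicate[of i "length y div p" "take p y"] i assms
      nth_mod_rotate_self[OF assms(1,2) i] by simp
qed

definition rotation_period :: "'a list \<Rightarrow> nat" where
  "rotation_period y = (LEAST p. 0 < p \<and> rotate p y = y)"

lemma rotation_period:
  "0 < rotation_period y" "rotate (rotation_period y) y = y"
proof -
  have "\<exists>p. 0 < p \<and> rotate p y = y"
    by (cases "y = []") (auto intro: exI[of _ "length y"] exI[of _ 1])
  then show "0 < rotation_period y" "rotate (rotation_period y) y = y"
    unfolding rotation_period_def by (metis (mono_tags, lifting) LeastI_ex)+
qed

lemma rotation_period_le: "0 < q \<Longrightarrow> rotate q y = y \<Longrightarrow> rotation_period y \<le> q"
  unfolding rotation_period_def by (rule Least_le) simp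

lemma rotation_period_dvd:
  assumes "rotate k y = y"
  shows "rotation_period y dvd k"
proof (rule ccontr)
  assume "\<not> rotation_period y dvd k"
  then have "0 < k mod rotation_period y"
    using mod_greater_zero_iff_not_dvd by blast
  moreover have "rotate (k mod rotation_period y) y = y"
    using rotate_mod_self[OF rotation_period(2)] assms by metis
  ultimately have "rotation_period y \<le> k mod rotation_period y"
    by (rule rotation_period_le)
  then show False
    using rotation_period(1)[of y] by (meson mod_less_divisor not_le)
qed

lemma Orbit_eq_image_rotation_period:
  "Orbit y = (\<lambda>k. rotate k y) ` {..<rotation_period y}"
proof
  show "Orbit y \<subseteq> (\<lambda>k. rotate k y) ` {..<rotation_period y}"
  proof
    fix z assume "z \<in> Orbit y"
    then obtain k where "z = rotate k y" by (auto simp: Orbit_def)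
    then have "z = rotate (k mod rotation_period y) y"
      using rotate_mod_self[OF rotation_period(2)] by metis
    then show "z \<in> (\<lambda>k. rotate k y) ` {..<rotation_period y}"
      using rotation_period(1)[of y] by auto
  qed
qed (auto simp: Orbit_def)

lemma inj_on_rotate_rotation_period: "inj_on (\<lambda>k. rotate k y) {..<rotation_period y}"
proof (rule linorder_inj_onI', rule notI)
  fix i j assume ij: "i < j" "j \<in> {..<rotation_period y}" and eq: "rotate i y = rotate j y"
  have "rotate (rotation_period y - j) (rotate j y) = y"
    using ij rotation_period(2)[of y] by (simp add: rotate_rotate)
  then have "rotate (rotation_period y - j + i) y = y"
    by (simp add: eq[symmetric] rotate_rotate)
  then have "rotation_period y \<le> rotation_period y - j + i"
    using ij by (intro rotation_period_le) auto
  then show False using ij by auto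
qed

lemma card_Orbit: "card (Orbit y) = rotation_period y"
  by (simp add: Orbit_eq_image_rotation_period card_image inj_on_rotate_rotation_period)

lemma finite_Orbit: "finite (Orbit y)"
  by (simp add: Orbit_eq_image_rotation_period)

lemma card_Orbit_dvd_length: "card (Orbit y) dvd length y"
  by (simp add: card_Orbit rotation_period_dvd)

lemma FP_eq_rotation_period:
  assumes "y \<noteq> []"
  shows "FP y = rotation_period y"
  unfolding FP_def
proof (rule Least_equality)
  let ?p = "rotation_period y"
  have "?p dvd length y" by (simp add: rotation_period_dvd)
  moreover have "?p \<le> length y"
    using assms by (intro rotation_period_le) auto
  ultimately show "0 < ?p \<and> ?p dvd length y \<and>
      (\<exists>y1. length y1 = ?p \<and> y = concat (replicate (length y div ?p) y1))"
    using rotation_period[of y] concat_replicate_take_if_rotate_self[of ?p y]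
    by (intro conjI exI[of _ "take ?p y"]) auto
next
  fix q assume q: "0 < q \<and> q dvd length y \<and>
      (\<exists>y1. length y1 = q \<and> y = concat (replicate (length y div q) y1))"
  then obtain y1 where y1: "length y1 = q" "y = concat (replicate (length y div q) y1)"
    by blast
  have "0 < length y div q"
    using q assms by (metis dvd_div_eq_0_iff length_0_conv neq0_conv)
  then have "rotate q y = y"
    using rotate_concat_replicate y1 by metis
  then show "rotation_period y \<le> q"
    using q by (intro rotation_period_le) auto
qed

lemma card_Orbit_eq_FP: "card (Orbit y) = FP y"
proof (cases "y = []")
  case True
  have "FP y = 1" unfolding FP_def True
    by (rule Least_equality) (auto intro: exI[of _ "[undefined]"])
  then show ?thesis using True by (simp add: Orbit_def)
qed (simp add: card_Orbit FP_eq_rotation_period)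

lemma self_in_Orbit: "y \<in> Orbit y"
  unfolding Orbit_def by (metis rangeI rotate0 id_apply)

lemma Orbit_subset_if_mem: "z \<in> Orbit y \<Longrightarrow> Orbit z \<subseteq> Orbit y"
  by (auto simp: Orbit_def rotate_rotate)

lemma Orbit_eq_if_mem:
  assumes "z \<in> Orbit y"
  shows "Orbit z = Orbit y"
proof
  obtain k where z: "z = rotate k y"
    using assms by (auto simp: Orbit_def)
  have "rotate (length y - k mod length y) z = rotate (length y - k mod length y + k mod length y) y"
    by (metis z rotate_rotate rotate_conv_mod)
  also have "\<dots> = y"
    by (cases "y = []") auto
  finally have "y \<in> Orbit z"
    unfolding Orbit_def by (metis rangeI)
  then show "Orbit y \<subseteq> Orbit z" by (rule Orbit_subset_if_mem)
qed (rule Orbit_subset_if_mem[OF assms])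

lemma sum_inverse_card_Orbit_Union:
  assumes "finite \<C>" "\<And>E. E \<in> \<C> \<Longrightarrow> \<exists>y. E = Orbit y"
  shows "(\<Sum>y\<in>\<Union>\<C>. 1 / real (card (Orbit y))) = real (card \<C>)"
proof -
  have "\<forall>E\<in>\<C>. finite E"
    using assms(2) finite_Orbit by blast
  moreover have "\<forall>E\<in>\<C>. \<forall>F\<in>\<C>. E \<noteq> F \<longrightarrow> E \<inter> F = {}"
  proof (intro ballI impI)
    fix E F assume "E \<in> \<C>" "F \<in> \<C>" "E \<noteq> F"
    then obtain y z where "E = Orbit y" "F = Orbit z" using assms(2) by blast
    then show "E \<inter> F = {}"
      using \<open>E \<noteq> F\<close> Orbit_eq_if_mem by blast
  qed
  ultimately have "(\<Sum>y\<in>\<Union>\<C>. 1 / real (card (Orbit y)))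
      = (\<Sum>E\<in>\<C>. \<Sum>y\<in>E. 1 / real (card (Orbit y)))"
    by (simp add: sum.Union_disjoint o_def)
  also have "\<dots> = (\<Sum>E\<in>\<C>. 1)"
  proof (rule sum.cong[OF refl])
    fix E assume "E \<in> \<C>"
    then obtain y where E: "E = Orbit y" using assms(2) by blast
    have "(\<Sum>z\<in>E. 1 / real (card (Orbit z))) = (\<Sum>z\<in>E. 1 / real (card E))"
      using E by (intro sum.cong) (simp_all add: Orbit_eq_if_mem[of _ y])
    also have "\<dots> = 1"
      using E self_in_Orbit[of y] finite_Orbit[of y] by (auto simp: card_gt_0_iff[symmetric])
    finally show "(\<Sum>z\<in>E. 1 / real (card (Orbit z))) = 1" .
  qed
  finally show ?thesis by simp
qed

lemma finite_strings: "finite (strings n :: 'a::finite list set)"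
  using finite_lists_length_eq[of "UNIV :: 'a set" n] by (simp add: strings_def)

lemma C_set_orbit:
  "E \<in> C_set x \<Longrightarrow> \<exists>y. E = Orbit y \<and> length y = length x"
  by (auto simp: C_set_def orbits_def strings_def)

lemma finite_C_set: "finite (C_set (x :: 'a::{finite, linorder} list))"
  by (rule finite_subset[of _ "orbits (length x)"])
    (auto simp: C_set_def orbits_def finite_strings)

lemma G_set_length: "G_set x (length x) = \<Union>(C_set x)"
proof -
  have "card E dvd length x" if "E \<in> C_set x" for E
    using C_set_orbit[OF that] card_Orbit_dvd_length by metis
  then have "{E \<in> C_set x. card E dvd length x} = C_set x"
    by blast
  then show ?thesis
    by (simp add: G_set_def)
qed

theorem lemma2:
  fixes x :: "'a::{finite, linorder} list" and n :: nat
  assumes "x \<in> strings n"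
  shows "real (card (C_set x)) = (\<Sum>y\<in>G_set x n. 1 / real (card (Orbit y)))
       \<and> (\<Sum>y\<in>G_set x n. 1 / real (card (Orbit y))) = (\<Sum>y\<in>G_set x n. 1 / real (FP y))"
proof
  have "length x = n"
    using assms by (simp add: strings_def)
  then have G: "G_set x n = \<Union>(C_set x)"
    using G_set_length[of x] by simp
  have "(\<Sum>y\<in>\<Union>(C_set x). 1 / real (card (Orbit y))) = real (card (C_set x))"
    by (rule sum_inverse_card_Orbit_Union[OF finite_C_set]) (use C_set_orbit in blast)
  then show "real (card (C_set x)) = (\<Sum>y\<in>G_set x n. 1 / real (card (Orbit y)))"
    unfolding G ..
  show "(\<Sum>y\<in>G_set x n. 1 / real (card (Orbit y))) = (\<Sum>y\<in>G_set x n. 1 / real (FP y))"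
    by (simp add: card_Orbit_eq_FP)
qed

end
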